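(* For $0<R<1$, let $\mathbb G(R)$ be the unique solution in $(0,1)$ of the equation $G=1-e^{-G/R}$. Then for any choice of $\theta\ge1$, codes $\mathcal C=\{\mathscr C_1,\dots,\mathscr C_\theta\}$ and probability mass function $\boldsymbol\Lambda=(\Lambda_1,\dots,\Lambda_\theta)$ as in the context whose rate $k/\bar n$ equals $R$, the asymptotic threshold satisfies $$G^*(\mathcal C,\boldsymbol\Lambda)\le\mathbb G(R).$$
   Context: For $h=1,\dots,\theta$, $\mathscr C_h$ is an $(n_h,k)$ binary linear block code (common dimension $k$) with minimum distance $d_h\ge2$ and no idle symbols (no coordinate identically zero on the code); $\Lambda_h\ge0$, $\sum_h\Lambda_h=1$; $\bar n=\sum_h\Lambda_hn_h$ and the rate is $R=k/\bar n$. Un-normalized information function $\tilde e^{(h)}_g$ ($0\le g\le n_h$): the sum over all $g$-subsets of columns of a generator matrix of $\mathscr C_h$ of the rank of the corresponding $k\times g$ submatrix ($\tilde e_0=0$). For $G\ge0$ define $f_{\mathsf b}(p)=\frac1{\bar n}\sum_h\Lambda_h\sum_{t=0}^{n_h-1}p^t(1-p)^{n_h-1-t}[(n_h-t)\tilde e^{(h)}_{n_h-t}-(t+1)\tilde e^{(h)}_{n_h-1-t}]$, $f_{\mathsf s}(q)=1-\exp\{-\frac{G}{R}q\}$, and the recursion $p_\ell=f_{\mathsf s}(f_{\mathsf b}(p_{\ell-1}))$ with $p_0=1-e^{-G/R}$. The asymptotic threshold (capacity of the scheme) is $G^*(\mathcal C,\boldsymbol\Lambda)=\sup\{G\ge0: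 p_\ell\to0\text{ as }\ell\to\infty\}$. *)

theory Defs
  imports "HOL-Analysis.Analysis" "HOL-Library.Z2"
begin

text \<open>A binary (n,k) linear code is given by a generator matrix
  M :: nat => nat => bit, with rows i < k and columns j < n (entries over GF(2)).\<close>

definition cols_indep :: "(nat \<Rightarrow> nat \<Rightarrow> bit) \<Rightarrow> nat \<Rightarrow> nat set \<Rightarrow> bool" where
  "cols_indep M k T \<longleftrightarrow>
     (\<forall>c :: nat \<Rightarrow> bit. (\<forall>i<k. (\<Sum>j\<in>T. c j * M i j) = 0) \<longrightarrow> (\<forall>j\<in>T. c j = 0))"

definition col_rank :: "(nat \<Rightarrow> nat \<Rightarrow> bit) \<Rightarrow> nat \<Rightarrow> nat set \<Rightarrow> nat" where
  "col_rank M k S = Max {card T | T. T \<subseteq> S \<and> cols_indep M k T}"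

definition encode :: "(nat \<Rightarrow> nat \<Rightarrow> bit) \<Rightarrow> nat \<Rightarrow> nat \<Rightarrow> (nat \<Rightarrow> bit) \<Rightarrow> (nat \<Rightarrow> bit)" where
  "encode M k n u = (\<lambda>j. if j < n then (\<Sum>i<k. u i * M i j) else 0)"

definition code :: "(nat \<Rightarrow> nat \<Rightarrow> bit) \<Rightarrow> nat \<Rightarrow> nat \<Rightarrow> (nat \<Rightarrow> bit) set" where
  "code M k n = range (encode M k n)"

definition hweight :: "nat \<Rightarrow> (nat \<Rightarrow> bit) \<Rightarrow> nat" where
  "hweight n c = card {j. j < n \<and> c j \<noteq> 0}"

text \<open>M is a generator matrix of an (n,k) binary linear code (rank k),
  with minimum distance at least 2 and no idle symbols.\<close>
definition good_gen_matrix :: "(nat \<Rightarrow> nat \<Rightarrow> bit) \<Rightarrow> nat \<Rightarrow> nat \<Rightarrow> bool" where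
  "good_gen_matrix M k n \<longleftrightarrow>
     col_rank M k {..<n} = k
     \<and> (\<forall>c\<in>code M k n. c \<noteq> (\<lambda>_. 0) \<longrightarrow> hweight n c \<ge> 2)
     \<and> (\<forall>j<n. \<exists>c\<in>code M k n. c j \<noteq> 0)"

text \<open>Un-normalized information function e~_g.\<close>
definition info_fun :: "(nat \<Rightarrow> nat \<Rightarrow> bit) \<Rightarrow> nat \<Rightarrow> nat \<Rightarrow> nat \<Rightarrow> real" where
  "info_fun M k n g = (\<Sum>S\<in>{S. S \<subseteq> {..<n} \<and> card S = g}. real (col_rank M k S))"

definition avg_len :: "nat \<Rightarrow> (nat \<Rightarrow> real) \<Rightarrow> (nat \<Rightarrow> nat) \<Rightarrow> real" where
  "avg_len \<theta> \<Lambda> n = (\<Sum>h<\<theta>. \<Lambda> h * real (n h))"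

definition f_b :: "nat \<Rightarrow> (nat \<Rightarrow> real) \<Rightarrow> (nat \<Rightarrow> nat) \<Rightarrow> (nat \<Rightarrow> nat \<Rightarrow> nat \<Rightarrow> bit) \<Rightarrow> nat
                     \<Rightarrow> real \<Rightarrow> real" where
  "f_b \<theta> \<Lambda> n M k p = (1 / avg_len \<theta> \<Lambda> n) *
     (\<Sum>h<\<theta>. \<Lambda> h * (\<Sum>t<n h. p ^ t * (1 - p) ^ (n h - 1 - t) *
        (real (n h - t) * info_fun (M h) k (n h) (n h - t)
         - real (t + 1) * info_fun (M h) k (n h) (n h - 1 - t))))"

definition f_s :: "real \<Rightarrow> real \<Rightarrow> real \<Rightarrow> real" where
  "f_s G R q = 1 - exp (- (G / R) * q)"

definition p_seq :: "(real \<Rightarrow> real) \<Rightarrow> real \<Rightarrow> real \<Rightarrow> nat \<Rightarrow> real" where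
  "p_seq fb G R l = ((\<lambda>x. f_s G R (fb x)) ^^ l) (1 - exp (- G / R))"

definition threshold :: "nat \<Rightarrow> (nat \<Rightarrow> real) \<Rightarrow> (nat \<Rightarrow> nat) \<Rightarrow> (nat \<Rightarrow> nat \<Rightarrow> nat \<Rightarrow> bit) \<Rightarrow> nat \<Rightarrow> real" where
  "threshold \<theta> \<Lambda> n M k =
     Sup {G. G \<ge> 0 \<and> p_seq (f_b \<theta> \<Lambda> n M k) G (real k / avg_len \<theta> \<Lambda> n) \<longlonglongrightarrow> 0}"

definition GG :: "real \<Rightarrow> real" where
  "GG R = (THE G. 0 < G \<and> G < 1 \<and> G = 1 - exp (- G / R))"

end

theory Submission
  imports Defs "HOL-Library.Function_Algebras"
begin

(* The proof is an area argument.  f_b is the Lambda-average of one polynomial per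
   component code, and of the code properties only full rank of the generator
   matrices is needed.
   (1) Over GF(2) the rank of a set of columns is the dimension of their span, so it
       has diminishing returns; hence the aggregated rank gains decrease, and the
       derivative of each component polynomial, written in Bernstein form, has
       nonnegative coefficients: f_b is nondecreasing on [0,1].
   (2) Beta integrals turn the integral of a component polynomial into a telescoping
       sum equal to k; hence f_b has area R on [0,1], and f_b 1 <= 1.
   (3) If the recursion p_l = f_s(f_b(p_(l-1))) tends to 0 for G > 0, the curve
       x |-> 1 - exp(-(G/R) f_b x) lies below the diagonal on [0,1]; comparing the
       integrals of this curve and of the diagonal against f_b' gives
       G <= 1 - exp(-G/R), which forces G <= GG R. *)


lemma (in vector_space) family_independent_iff:
  assumes "finite T"
  shows "(\<forall>c. (\<Sum>j\<in>T. scale (c j) (v j)) = 0 \<longrightarrow> (\<forall>j\<in>T. c j = 0))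
         \<longleftrightarrow> inj_on v T \<and> independent (v ` T)"
proof
  assume indep: "\<forall>c. (\<Sum>j\<in>T. scale (c j) (v j)) = 0 \<longrightarrow> (\<forall>j\<in>T. c j = 0)"
  have inj: "inj_on v T"
  proof (rule inj_onI, rule ccontr)
    fix x y assume xy: "x \<in> T" "y \<in> T" "v x = v y" "x \<noteq> y"
    define c :: "_ \<Rightarrow> 'a" where "c j = (if j = x then 1 else if j = y then -1 else 0)" for j
    have "(\<Sum>j\<in>T. scale (c j) (v j)) = (\<Sum>j\<in>{x,y}. scale (c j) (v j))"
      by (rule sum.mono_neutral_right) (use assms xy in \<open>auto simp: c_def\<close>)
    also have "\<dots> = 0" using xy by (simp add: c_def)
    finally have "c x = 0" using indep xy(1) by blast
    then show False by (simp add: c_def)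
  qed
  moreover have "independent (v ` T)"
  proof
    assume "dependent (v ` T)"
    then obtain u where u: "\<exists>w\<in>v ` T. u w \<noteq> 0" "(\<Sum>w\<in>v ` T. scale (u w) w) = 0"
      using dependent_finite[OF finite_imageI[OF assms]] by blast
    have "(\<Sum>j\<in>T. scale (u (v j)) (v j)) = 0"
      using u(2) sum.reindex[OF inj, of "\<lambda>w. scale (u w) w"] by simp
    then have "\<forall>j\<in>T. u (v j) = 0" using spec[OF indep, of "\<lambda>j. u (v j)"] by simp
    with u(1) show False by blast
  qed
  ultimately show "inj_on v T \<and> independent (v ` T)" ..
next
  assume inj_indep: "inj_on v T \<and> independent (v ` T)"
  show "\<forall>c. (\<Sum>j\<in>T. scale (c j) (v j)) = 0 \<longrightarrow> (\<forall>j\<in>T. c j = 0)"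
  proof (intro allI impI)
    fix c assume zero: "(\<Sum>j\<in>T. scale (c j) (v j)) = 0"
    define u where "u w = c (inv_into T v w)" for w
    have "(\<Sum>w\<in>v ` T. scale (u w) w) = (\<Sum>j\<in>T. scale (c j) (v j))"
      using inj_indep by (simp add: sum.reindex u_def)
    then have "\<forall>w\<in>v ` T. u w = 0"
      using zero inj_indep dependent_finite[OF finite_imageI[OF assms]] by auto
    then show "\<forall>j\<in>T. c j = 0" using inj_indep by (auto simp: u_def)
  qed
qed

(* Adding one vector to a finite set raises the dimension by one exactly when the
   vector is new to the span (the library proves this only in finite dimension). *)
lemma (in vector_space) dim_insert_finite:
  assumes "finite S"
  shows "dim (insert x S) = (if x \<in> span S then dim S else Suc (dim S))"
proof (cases "x \<in> span S")
  case True
  then show ?thesis by (metis dim_span span_redundant)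
next
  case False
  obtain B where B: "B \<subseteq> span S" "independent B" "span S \<subseteq> span B" "card B = dim (span S)"
    using basis_exists [of "span S"] by blast
  have "finite B" using independent_span_bound[OF assms B(2) B(1)] by blast
  have "dim (span (insert x S)) = Suc (dim S)"
  proof (rule dim_unique)
    show "insert x B \<subseteq> span (insert x S)"
      by (meson B(1) insertI1 insert_subset order_trans span_base span_mono subset_insertI)
    show "span (insert x S) \<subseteq> span (insert x B)"
      by (metis B(1,3) span_breakdown_eq span_subspace subsetI subspace_span)
    show "independent (insert x B)"
      by (metis B(1-3) independent_insert span_subspace subspace_span False)
    show "card (insert x B) = Suc (dim S)"
      using B False \<open>finite B\<close> by force
  qed
  then show ?thesis by (metis False dim_span)
qed


definition gf2_scale :: "bit \<Rightarrow> (nat \<Rightarrow> bit) \<Rightarrow> (nat \<Rightarrow> bit)" where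
  "gf2_scale c v = (\<lambda>i. c * v i)"

interpretation gf2: vector_space gf2_scale
  by unfold_locales (auto simp: gf2_scale_def fun_eq_iff algebra_simps)

definition column :: "(nat \<Rightarrow> nat \<Rightarrow> bit) \<Rightarrow> nat \<Rightarrow> nat \<Rightarrow> (nat \<Rightarrow> bit)" where
  "column M k j = (\<lambda>i. if i < k then M i j else 0)"

lemma sum_column_apply:
  fixes c :: "nat \<Rightarrow> 'a::comm_semiring_0"
  assumes "finite T"
  shows "(\<Sum>j\<in>T. (\<lambda>i. c j * (if i < k then M i j else 0))) i
         = (if i < k then \<Sum>j\<in>T. c j * M i j else 0)"
  using assms by (induction T rule: finite_induct) auto

lemma cols_indep_iff:
  assumes "finite T"
  shows "cols_indep M k T \<longleftrightarrow> inj_on (column M k) T \<and> gf2.independent (column M k ` T)"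
proof -
  have "(\<Sum>j\<in>T. gf2_scale (c j) (column M k j)) = 0 \<longleftrightarrow> (\<forall>i<k. (\<Sum>j\<in>T. c j * M i j) = 0)"
    for c
    unfolding gf2_scale_def column_def fun_eq_iff sum_column_apply[OF assms] zero_fun_def
    by (metis (mono_tags, lifting))
  then show ?thesis
    unfolding cols_indep_def gf2.family_independent_iff[OF assms, symmetric] by simp
qed

lemma col_rank_dim:
  assumes "finite S"
  shows "col_rank M k S = gf2.dim (column M k ` S)"
proof -
  let ?V = "column M k ` S"
  let ?A = "{card T | T. T \<subseteq> S \<and> cols_indep M k T}"
  obtain B where B: "B \<subseteq> ?V" "gf2.independent B" "?V \<subseteq> gf2.span B" "card B = gf2.dim ?V"
    using gf2.basis_exists by blast
  have "finite B" using B(1) assms finite_subset by blast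
  have "finite ?A"
    by (rule finite_subset[of _ "card ` Pow S"]) (use assms in auto)
  moreover have "y \<le> gf2.dim ?V" if "y \<in> ?A" for y
  proof -
    obtain T where T: "y = card T" "T \<subseteq> S" "cols_indep M k T" using \<open>y \<in> ?A\<close> by blast
    have "finite T" using T(2) assms finite_subset by blast
    then have T_indep: "inj_on (column M k) T" "gf2.independent (column M k ` T)"
      using T(3) cols_indep_iff by auto
    have "column M k ` T \<subseteq> gf2.span B" using T(2) B(3) by blast
    then have "card (column M k ` T) \<le> card B"
      using gf2.independent_span_bound[OF \<open>finite B\<close> T_indep(2)] by blast
    then show ?thesis using T(1) B(4) card_image[OF T_indep(1)] by simp
  qed
  moreover have "gf2.dim ?V \<in> ?A"
  proof -
    define T where "T = inv_into S (column M k) ` B"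
    have "T \<subseteq> S" unfolding T_def using B(1) by (auto intro: inv_into_into)
    have img: "column M k ` T = B" unfolding T_def using B(1)
      by (auto simp: image_image f_inv_into_f subset_eq intro!: image_eqI)
    have inj: "inj_on (column M k) T"
      unfolding T_def using B(1) by (auto intro!: inj_onI simp: f_inv_into_f subset_eq)
    have "finite T" using \<open>T \<subseteq> S\<close> assms finite_subset by blast
    then have "cols_indep M k T" using cols_indep_iff inj img B(2) by simp
    moreover have "card T = gf2.dim ?V" using card_image[OF inj] img B(4) by simp
    ultimately show ?thesis using \<open>T \<subseteq> S\<close> by (auto intro!: exI[of _ T])
  qed
  ultimately show ?thesis unfolding col_rank_def by (intro Max_eqI) auto
qed

lemma col_rank_insert:
  assumes "finite S"
  shows "col_rank M k (insert j S) =
    (if column M k j \<in> gf2.span (column M k ` S) then col_rank M k S else Suc (col_rank M k S))"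
  using assms by (simp add: col_rank_dim gf2.dim_insert_finite)

lemma col_rank_gain_antimono:
  assumes "finite S'" "S \<subseteq> S'"
  shows "real (col_rank M k (insert j S')) - real (col_rank M k S')
       \<le> real (col_rank M k (insert j S)) - real (col_rank M k S)"
proof -
  have "finite S" using assms finite_subset by blast
  have "gf2.span (column M k ` S) \<subseteq> gf2.span (column M k ` S')"
    using assms(2) by (intro gf2.span_mono) auto
  then show ?thesis
    using col_rank_insert[OF \<open>finite S\<close>, of M k j] col_rank_insert[OF assms(1), of M k j] by auto
qed

lemma col_rank_le_card:
  assumes "finite S"
  shows "col_rank M k S \<le> card S"
  using col_rank_dim[OF assms] gf2.dim_le_card'[of "column M k ` S"]
    card_image_le[OF assms, of "column M k"]
    assms by simp

lemma col_rank_empty: "col_rank M k {} = 0"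
  using col_rank_le_card[of "{}"] by simp


definition subsets_of_card :: "nat \<Rightarrow> nat \<Rightarrow> nat set set" where
  "subsets_of_card n s = {S. S \<subseteq> {..<n} \<and> card S = s}"

lemma finite_subsets_of_card [simp]: "finite (subsets_of_card n s)"
  unfolding subsets_of_card_def by (rule finite_subset[of _ "Pow {..<n}"]) auto

lemma card_complement_subset:
  "S \<in> subsets_of_card n s \<Longrightarrow> card ({..<n} - S) = n - s"
  by (auto simp: subsets_of_card_def card_Diff_subset finite_subset)

(* Pairs (S, i) with |S| = s and i outside S correspond to pairs (T, i) with |T| = s+1
   and i in T, via T = insert i S. *)
lemma sum_extend_by_one:
  "(\<Sum>S\<in>subsets_of_card n s. \<Sum>i\<in>{..<n}-S. G (insert i S) i)
   = (\<Sum>T\<in>subsets_of_card n (Suc s). \<Sum>i\<in>T. (G T i :: real))"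
proof -
  have "(\<Sum>S\<in>subsets_of_card n s. \<Sum>i\<in>{..<n}-S. G (insert i S) i)
        = (\<Sum>(S,i)\<in>Sigma (subsets_of_card n s) (\<lambda>S. {..<n}-S). G (insert i S) i)"
    by (rule sum.Sigma) auto
  also have "\<dots> = (\<Sum>(T,i)\<in>Sigma (subsets_of_card n (Suc s)) (\<lambda>T. T). G T i)"
  proof (rule sum.reindex_bij_witness[where i="\<lambda>(T,i). (T - {i}, i)" and j="\<lambda>(S,i). (insert i S, i)"])
    fix a assume "a \<in> Sigma (subsets_of_card n s) (\<lambda>S. {..<n}-S)"
    then obtain S i where a: "a = (S,i)" "S \<subseteq> {..<n}" "card S = s" "i < n" "i \<notin> S"
      by (auto simp: subsets_of_card_def)
    have "finite S" using a(2) finite_subset by blast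
    then show "(case (case a of (S, i) \<Rightarrow> (insert i S, i)) of (T, i) \<Rightarrow> (T - {i}, i)) = a"
      and "(case a of (S, i) \<Rightarrow> (insert i S, i)) \<in> Sigma (subsets_of_card n (Suc s)) (\<lambda>T. T)"
      and "(case (case a of (S, i) \<Rightarrow> (insert i S, i)) of (T, i) \<Rightarrow> G T i)
           = (case a of (S, i) \<Rightarrow> G (insert i S) i)"
      using a by (auto simp: subsets_of_card_def)
  next
    fix b assume "b \<in> Sigma (subsets_of_card n (Suc s)) (\<lambda>T. T)"
    then obtain T i where b: "b = (T,i)" "T \<subseteq> {..<n}" "card T = Suc s" "i \<in> T"
      by (auto simp: subsets_of_card_def)
    have "finite T" using b(2) finite_subset by blast
    then show "(case (case b of (T, i) \<Rightarrow> (T - {i}, i)) of (S, i) \<Rightarrow> (insert i S, i)) = b"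
      and "(case b of (T, i) \<Rightarrow> (T - {i}, i)) \<in> Sigma (subsets_of_card n s) (\<lambda>S. {..<n}-S)"
      using b by (auto simp: subsets_of_card_def)
  qed
  also have "\<dots> = (\<Sum>T\<in>subsets_of_card n (Suc s). \<Sum>i\<in>T. G T i)"
    by (rule sum.Sigma[symmetric]) (auto simp: subsets_of_card_def intro: finite_subset)
  finally show ?thesis .
qed

(* Each element is omitted from exactly one of the card B leave-one-out sums. *)
lemma sum_leave_one_out:
  assumes "finite B"
  shows "(\<Sum>i\<in>B. \<Sum>j\<in>B-{i}. f j) = (real (card B) - 1) * (\<Sum>j\<in>B. f j :: real)"
proof -
  have "(\<Sum>i\<in>B. \<Sum>j\<in>B-{i}. f j) = (\<Sum>i\<in>B. (\<Sum>j\<in>B. f j) - f i)"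
    by (rule sum.cong) (auto simp: sum_diff1 assms)
  then show ?thesis by (simp add: sum_subtractf algebra_simps)
qed

lemma info_fun_subsets: "info_fun M k n g = (\<Sum>S\<in>subsets_of_card n g. real (col_rank M k S))"
  unfolding info_fun_def subsets_of_card_def by simp

definition rank_gain :: "(nat \<Rightarrow> nat \<Rightarrow> bit) \<Rightarrow> nat \<Rightarrow> nat \<Rightarrow> nat \<Rightarrow> real" where
  "rank_gain M k n s = (\<Sum>S\<in>subsets_of_card n s. \<Sum>j\<in>{..<n}-S.
      (real (col_rank M k (insert j S)) - real (col_rank M k S)))"

lemma rank_gain_info_fun:
  "rank_gain M k n s = real (Suc s) * info_fun M k n (Suc s) - real (n - s) * info_fun M k n s"
proof -
  have "(\<Sum>S\<in>subsets_of_card n s. \<Sum>j\<in>{..<n}-S. real (col_rank M k (insert j S)))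
      = (\<Sum>T\<in>subsets_of_card n (Suc s). \<Sum>i\<in>T. real (col_rank M k T))"
    by (rule sum_extend_by_one)
  also have "\<dots> = (\<Sum>T\<in>subsets_of_card n (Suc s). real (Suc s) * real (col_rank M k T))"
    by (rule sum.cong) (auto simp: subsets_of_card_def)
  finally have gained: "(\<Sum>S\<in>subsets_of_card n s. \<Sum>j\<in>{..<n}-S. real (col_rank M k (insert j S)))
      = real (Suc s) * info_fun M k n (Suc s)"
    by (simp add: info_fun_subsets sum_distrib_left)
  have "(\<Sum>S\<in>subsets_of_card n s. \<Sum>j\<in>{..<n}-S. real (col_rank M k S))
      = (\<Sum>S\<in>subsets_of_card n s. real (n - s) * real (col_rank M k S))"
    by (rule sum.cong) (simp_all add: card_complement_subset)
  then have base: "(\<Sum>S\<in>subsets_of_card n s. \<Sum>j\<in>{..<n}-S. real (col_rank M k S))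
      = real (n - s) * info_fun M k n s"
    by (simp add: info_fun_subsets sum_distrib_left)
  show ?thesis
    unfolding rank_gain_def sum_subtractf gained base ..
qed

(* Concavity of the information function: by diminishing returns of the rank,
   normalized rank gains decrease with the subset size. *)
lemma rank_gain_decreasing:
  assumes "Suc s \<le> n"
  shows "real (Suc s) * rank_gain M k n (Suc s) \<le> real (n - Suc s) * rank_gain M k n s"
proof -
  define \<delta> where "\<delta> S j = real (col_rank M k (insert j S)) - real (col_rank M k S)" for S j
  have "real (Suc s) * rank_gain M k n (Suc s)
      = (\<Sum>T\<in>subsets_of_card n (Suc s). \<Sum>i\<in>T. \<Sum>j\<in>{..<n}-T. \<delta> T j)"
    unfolding rank_gain_def \<delta>_def sum_distrib_left
    by (rule sum.cong) (auto simp: subsets_of_card_def sum_distrib_left)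
  also have "\<dots> \<le> (\<Sum>T\<in>subsets_of_card n (Suc s). \<Sum>i\<in>T. \<Sum>j\<in>{..<n}-T. \<delta> (T - {i}) j)"
  proof (intro sum_mono)
    fix T i j assume "T \<in> subsets_of_card n (Suc s)"
    then have "finite T" by (auto simp: subsets_of_card_def intro: finite_subset)
    then show "\<delta> T j \<le> \<delta> (T - {i}) j" unfolding \<delta>_def by (rule col_rank_gain_antimono) auto
  qed
  also have "\<dots> = (\<Sum>S\<in>subsets_of_card n s. \<Sum>i\<in>{..<n}-S. \<Sum>j\<in>{..<n}-insert i S. \<delta> (insert i S - {i}) j)"
    by (rule sum_extend_by_one[symmetric])
  also have "\<dots> = (\<Sum>S\<in>subsets_of_card n s. \<Sum>i\<in>{..<n}-S. \<Sum>j\<in>({..<n}-S)-{i}. \<delta> S j)"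
    by (intro sum.cong refl) auto
  also have "\<dots> = (\<Sum>S\<in>subsets_of_card n s. real (n - Suc s) * (\<Sum>j\<in>{..<n}-S. \<delta> S j))"
    by (rule sum.cong[OF refl])
      (use assms in \<open>simp add: sum_leave_one_out card_complement_subset of_nat_diff\<close>)
  also have "\<dots> = real (n - Suc s) * rank_gain M k n s"
    unfolding rank_gain_def \<delta>_def sum_distrib_left ..
  finally show ?thesis .
qed


definition bernstein_sum :: "(nat \<Rightarrow> real) \<Rightarrow> nat \<Rightarrow> real \<Rightarrow> real" where
  "bernstein_sum c m p = (\<Sum>t<Suc m. p ^ t * (1 - p) ^ (m - t) * c t)"

definition bernstein_deriv :: "(nat \<Rightarrow> real) \<Rightarrow> nat \<Rightarrow> real \<Rightarrow> real" where
  "bernstein_deriv c m p =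
     (\<Sum>t<m. p ^ t * (1 - p) ^ (m - 1 - t) * (real (Suc t) * c (Suc t) - real (m - t) * c t))"

lemma bernstein_sum_has_derivative:
  "(bernstein_sum c m has_real_derivative bernstein_deriv c m p) (at p)"
proof -
  have "(bernstein_sum c m has_real_derivative
     (\<Sum>t<Suc m. real t * p ^ (t - 1) * (1 - p) ^ (m - t) * c t
                - real (m - t) * p ^ t * (1 - p) ^ (m - t - 1) * c t)) (at p)"
    unfolding bernstein_sum_def
    by (rule DERIV_sum) (auto intro!: derivative_eq_intros simp: algebra_simps)
  moreover have "(\<Sum>t<Suc m. real t * p ^ (t - 1) * (1 - p) ^ (m - t) * c t)
      = (\<Sum>t<m. real (Suc t) * p ^ t * (1 - p) ^ (m - 1 - t) * c (Suc t))"
  proof -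
    have "\<And>t. m - Suc t = m - 1 - t" by auto
    then show ?thesis unfolding sum.lessThan_Suc_shift by simp
  qed
  moreover have "(\<Sum>t<Suc m. real (m - t) * p ^ t * (1 - p) ^ (m - t - 1) * c t)
      = (\<Sum>t<m. real (m - t) * p ^ t * (1 - p) ^ (m - 1 - t) * c t)"
  proof -
    have "\<And>t. m - t - 1 = m - 1 - t" by auto
    then show ?thesis unfolding sum.lessThan_Suc by simp
  qed
  ultimately show ?thesis
    unfolding bernstein_deriv_def sum_subtractf by (simp add: sum_subtractf[symmetric] algebra_simps)
qed

lemma has_integral_unit_interval:
  assumes "\<And>x. (F has_real_derivative f x) (at x)"
  shows "(f has_integral (F 1 - F 0)) {0..1::real}"
  by (rule fundamental_theorem_of_calculus)
    (auto intro: has_field_derivative_at_within assms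
          simp: has_real_derivative_iff_has_vector_derivative[symmetric])

lemma beta_integral:
  "((\<lambda>p::real. p ^ t * (1 - p) ^ j) has_integral (fact t * fact j / fact (t + j + 1))) {0..1}"
proof (induction j arbitrary: t)
  case 0
  have "((\<lambda>p::real. p ^ t) has_integral
          ((\<lambda>p. p ^ Suc t / real (Suc t)) 1 - (\<lambda>p. p ^ Suc t / real (Suc t)) 0)) {0..1}"
    by (rule has_integral_unit_interval) (auto intro!: derivative_eq_intros simp del: power_Suc)
  then show ?case by simp
next
  case (Suc j)
  define F where "F p = p ^ Suc t * (1 - p) ^ Suc j" for p :: real
  have "((\<lambda>p. real (Suc t) * (p ^ t * (1 - p) ^ Suc j) - real (Suc j) * (p ^ Suc t * (1 - p) ^ j))
          has_integral (F 1 - F 0)) {0..1}"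
    unfolding F_def
    by (rule has_integral_unit_interval)
      (auto intro!: derivative_eq_intros simp del: power_Suc simp: algebra_simps)
  then have by_parts: "((\<lambda>p. real (Suc t) * (p ^ t * (1 - p) ^ Suc j)
       - real (Suc j) * (p ^ Suc t * (1 - p) ^ j)) has_integral 0) {0..1}"
    by (simp add: F_def)
  have "((\<lambda>p. real (Suc j) * (p ^ Suc t * (1 - p) ^ j)) has_integral
          (real (Suc j) * (fact (Suc t) * fact j / fact (Suc t + j + 1)))) {0..1}"
    by (rule has_integral_mult_right) (rule Suc.IH)
  from has_integral_add[OF by_parts this]
  have "((\<lambda>p. real (Suc t) * (p ^ t * (1 - p) ^ Suc j)) has_integral
          (real (Suc j) * (fact (Suc t) * fact j / fact (Suc t + j + 1)))) {0..1}"
    by simp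
  from has_integral_mult_right[OF this, of "1 / real (Suc t)"]
  have "((\<lambda>p. p ^ t * (1 - p) ^ Suc j) has_integral
          (real (Suc j) * (fact (Suc t) * fact j / fact (Suc t + j + 1)) / real (Suc t))) {0..1}"
    by simp
  moreover have "real (Suc j) * (fact (Suc t) * fact j / fact (Suc t + j + 1)) / real (Suc t)
      = fact t * fact (Suc j) / fact (t + Suc j + 1)"
    unfolding fact_Suc[of t] fact_Suc[of j] by (simp add: field_simps del: of_nat_Suc)
  ultimately show ?case by (simp only:)
qed


definition code_coef :: "(nat \<Rightarrow> nat \<Rightarrow> bit) \<Rightarrow> nat \<Rightarrow> nat \<Rightarrow> nat \<Rightarrow> real" where
  "code_coef M k n t =
     real (n - t) * info_fun M k n (n - t) - real (t + 1) * info_fun M k n (n - 1 - t)"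

definition code_poly :: "(nat \<Rightarrow> nat \<Rightarrow> bit) \<Rightarrow> nat \<Rightarrow> nat \<Rightarrow> real \<Rightarrow> real" where
  "code_poly M k n p = (\<Sum>t<n. p ^ t * (1 - p) ^ (n - 1 - t) * code_coef M k n t)"

definition code_poly_deriv :: "(nat \<Rightarrow> nat \<Rightarrow> bit) \<Rightarrow> nat \<Rightarrow> nat \<Rightarrow> real \<Rightarrow> real" where
  "code_poly_deriv M k n = bernstein_deriv (code_coef M k n) (n - 1)"

lemma code_poly_bernstein: "code_poly M k (Suc m) = bernstein_sum (code_coef M k (Suc m)) m"
  unfolding code_poly_def bernstein_sum_def by (rule ext) simp

lemma code_coef_rank_gain: "t < n \<Longrightarrow> code_coef M k n t = rank_gain M k n (n - 1 - t)"
  unfolding code_coef_def rank_gain_info_fun by (simp add: Suc_diff_Suc)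

lemma code_poly_has_derivative:
  assumes "0 < n"
  shows "(code_poly M k n has_real_derivative code_poly_deriv M k n p) (at p)"
proof -
  obtain m where "n = Suc m" using assms gr0_implies_Suc by blast
  then show ?thesis
    using bernstein_sum_has_derivative[of "code_coef M k n" m p] code_poly_bernstein[of M k m]
    by (simp add: code_poly_deriv_def)
qed

(* Each component polynomial is nondecreasing on [0,1]: every Bernstein coefficient of
   its derivative is nonnegative by the decrease of the rank gains. *)
lemma code_poly_deriv_nonneg:
  assumes "0 < n" "0 \<le> p" "p \<le> 1"
  shows "0 \<le> code_poly_deriv M k n p"
proof -
  obtain m where n: "n = Suc m" using assms gr0_implies_Suc by blast
  have "0 \<le> real (Suc t) * code_coef M k n (Suc t) - real (m - t) * code_coef M k n t"
    if "t < m" for t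
  proof -
    define s where "s = m - 1 - t"
    have "code_coef M k n (Suc t) = rank_gain M k n s"
      using that by (simp add: code_coef_rank_gain n s_def)
    moreover have "code_coef M k n t = rank_gain M k n (Suc s)"
      using that by (simp add: code_coef_rank_gain n s_def Suc_diff_Suc)
    moreover have "real (Suc s) * rank_gain M k n (Suc s) \<le> real (n - Suc s) * rank_gain M k n s"
      by (rule rank_gain_decreasing) (use that in \<open>simp add: n s_def\<close>)
    moreover have "m - t = Suc s" "n - Suc s = Suc t" using that by (auto simp: n s_def)
    ultimately show ?thesis by simp
  qed
  then show ?thesis
    unfolding code_poly_deriv_def bernstein_deriv_def using assms
    by (auto intro!: sum_nonneg simp: n)
qed

lemma info_fun_0: "info_fun M k n 0 = 0"
proof -
  have "subsets_of_card n 0 = {{}}"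
    unfolding subsets_of_card_def by (auto intro: finite_subset)
      (metis card_0_eq finite_lessThan finite_subset empty_iff)
  then show ?thesis by (simp add: info_fun_subsets col_rank_empty)
qed

lemma info_fun_full: "info_fun M k n n = real (col_rank M k {..<n})"
proof -
  have "S = {..<n}" if "S \<subseteq> {..<n}" "card S = n" for S
    using that by (intro card_subset_eq) auto
  then have "subsets_of_card n n = {{..<n}}" unfolding subsets_of_card_def by auto
  then show ?thesis by (simp add: info_fun_subsets)
qed

lemma info_fun_1: "info_fun M k n 1 \<le> real n"
proof -
  have "info_fun M k n 1 \<le> (\<Sum>S\<in>subsets_of_card n 1. 1)"
    unfolding info_fun_subsets
  proof (rule sum_mono)
    fix S assume "S \<in> subsets_of_card n 1"
    then have "finite S" "card S = 1" by (auto simp: subsets_of_card_def intro: finite_subset)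
    then show "real (col_rank M k S) \<le> 1" using col_rank_le_card[of S M k] by simp
  qed
  also have "(\<Sum>S\<in>subsets_of_card n 1. 1) = real n"
    unfolding subsets_of_card_def using n_subsets[of "{..<n}" 1] by simp
  finally show ?thesis .
qed

(* At p = 1 only the top coefficient survives, which is bounded by the number of
   columns of rank one. *)
lemma code_poly_at_1:
  assumes "0 < n"
  shows "code_poly M k n 1 \<le> real n"
proof -
  obtain m where n: "n = Suc m" using assms gr0_implies_Suc by blast
  have "code_poly M k n 1 = code_coef M k n m"
    unfolding code_poly_def n sum.lessThan_Suc by (simp add: sum.neutral)
  also have "\<dots> = info_fun M k n 1 - real n * info_fun M k n 0"
    unfolding code_coef_def by (simp add: n)
  also have "\<dots> \<le> real n" using info_fun_1[of M k n] by (simp add: info_fun_0)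
  finally show ?thesis .
qed

(* Area under a component polynomial equals the code dimension: the beta integrals turn
   the integrand into a telescoping sum of normalized information-function values. *)
lemma code_poly_integral:
  assumes "col_rank M k {..<n} = k" "0 < n"
  shows "(code_poly M k n has_integral real k) {0..1}"
proof -
  obtain m where n: "n = Suc m" using assms(2) gr0_implies_Suc by blast
  define c where "c = code_coef M k n"
  define w where "w g = fact g * fact (n - g) / fact n * info_fun M k n g" for g
  have integral: "((\<lambda>p. \<Sum>t<Suc m. p ^ t * (1 - p) ^ (m - t) * c t) has_integral
        (\<Sum>t<Suc m. fact t * fact (m - t) / fact (t + (m - t) + 1) * c t)) {0..1}"
    by (intro has_integral_sum finite_lessThan has_integral_mult_left beta_integral)
  have "fact t * fact (m - t) / fact (t + (m - t) + 1) * c t = w (n - t) - w (n - Suc t)"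
    if "t < Suc m" for t
  proof -
    have t: "t + (m - t) + 1 = n" "n - t = Suc (m - t)" "n - Suc t = m - t" "n - (m - t) = Suc t"
      "n - Suc (m - t) = t" "n - 1 - t = m - t"
      using that by (auto simp: n)
    have "w (n - t) = (real (Suc (m - t)) * fact (m - t)) * fact t / fact n * info_fun M k n (Suc (m - t))"
      unfolding w_def using t by (simp add: fact_Suc)
    moreover have "w (n - Suc t) = fact (m - t) * (real (Suc t) * fact t) / fact n * info_fun M k n (m - t)"
      unfolding w_def using t by (simp add: fact_Suc del: of_nat_Suc)
    moreover have "c t = real (Suc (m - t)) * info_fun M k n (Suc (m - t))
                       - real (Suc t) * info_fun M k n (m - t)"
      unfolding c_def code_coef_def using t by simp
    ultimately show ?thesis unfolding t(1) by (simp only:) (simp add: field_simps algebra_simps)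
  qed
  then have "(\<Sum>t<Suc m. fact t * fact (m - t) / fact (t + (m - t) + 1) * c t)
      = (\<Sum>t<n. w (n - t) - w (n - Suc t))"
    by (simp add: n)
  also have "\<dots> = w n - w 0"
    using sum_lessThan_telescope'[where f="\<lambda>t. w (n - t)" and m=n] by simp
  also have "\<dots> = real k"
    unfolding w_def using assms by (simp add: info_fun_0 info_fun_full)
  finally show ?thesis
    using integral unfolding code_poly_bernstein n bernstein_sum_def c_def by simp
qed


lemma f_b_mixture:
  "f_b \<theta> \<Lambda> n M k p = (\<Sum>h<\<theta>. \<Lambda> h * code_poly (M h) k (n h) p) / avg_len \<theta> \<Lambda> n"
  unfolding f_b_def code_poly_def code_coef_def by simp

lemma f_b_nondecreasing:
  assumes "\<forall>h<\<theta>. 0 < n h" "\<forall>h<\<theta>. 0 \<le> \<Lambda> h" "0 < avg_len \<theta> \<Lambda> n"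
  shows "\<exists>f'. (\<forall>p. (f_b \<theta> \<Lambda> n M k has_real_derivative f' p) (at p))
             \<and> (\<forall>p. 0 \<le> p \<longrightarrow> p \<le> 1 \<longrightarrow> 0 \<le> f' p)"
proof (intro exI conjI allI impI)
  let ?f' = "\<lambda>p. (\<Sum>h<\<theta>. \<Lambda> h * code_poly_deriv (M h) k (n h) p) / avg_len \<theta> \<Lambda> n"
  show "(f_b \<theta> \<Lambda> n M k has_real_derivative ?f' p) (at p)" for p
    unfolding f_b_mixture[abs_def] using assms(1)
    by (intro DERIV_cdivide DERIV_sum DERIV_cmult code_poly_has_derivative) auto
  show "0 \<le> ?f' p" if "0 \<le> p" "p \<le> 1" for p
    using assms that
    by (intro divide_nonneg_pos sum_nonneg mult_nonneg_nonneg code_poly_deriv_nonneg) auto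
qed

lemma f_b_integral:
  assumes "\<forall>h<\<theta>. col_rank (M h) k {..<n h} = k" "\<forall>h<\<theta>. 0 < n h" "(\<Sum>h<\<theta>. \<Lambda> h) = 1"
  shows "(f_b \<theta> \<Lambda> n M k has_integral real k / avg_len \<theta> \<Lambda> n) {0..1}"
proof -
  have "((\<lambda>p. \<Sum>h<\<theta>. \<Lambda> h * code_poly (M h) k (n h) p) has_integral (\<Sum>h<\<theta>. \<Lambda> h * real k)) {0..1}"
    using assms(1,2) by (intro has_integral_sum has_integral_mult_right code_poly_integral) auto
  then have "((\<lambda>p. \<Sum>h<\<theta>. \<Lambda> h * code_poly (M h) k (n h) p) has_integral real k) {0..1}"
    using assms(3) by (simp add: sum_distrib_right[symmetric])
  then show ?thesis
    unfolding f_b_mixture[abs_def] by (rule has_integral_divide)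
qed

lemma f_b_at_1:
  assumes "\<forall>h<\<theta>. 0 < n h" "\<forall>h<\<theta>. 0 \<le> \<Lambda> h" "0 < avg_len \<theta> \<Lambda> n"
  shows "f_b \<theta> \<Lambda> n M k 1 \<le> 1"
proof -
  have "(\<Sum>h<\<theta>. \<Lambda> h * code_poly (M h) k (n h) 1) \<le> avg_len \<theta> \<Lambda> n"
    unfolding avg_len_def using assms(1,2)
    by (intro sum_mono mult_left_mono code_poly_at_1) auto
  then show ?thesis
    unfolding f_b_mixture using assms(3) by simp
qed


(* The gap in the fixed-point equation G = 1 - exp(-G/R) that defines GG R; it is
   strictly concave, vanishes at 0 and has slope 1/R - 1 > 0 there. *)
definition fixed_point_gap :: "real \<Rightarrow> real \<Rightarrow> real" where
  "fixed_point_gap R x = 1 - exp (- x / R) - x"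

lemma fixed_point_gap_deriv:
  "R \<noteq> 0 \<Longrightarrow> (fixed_point_gap R has_real_derivative (exp (- x / R) / R - 1)) (at x)"
  unfolding fixed_point_gap_def by (auto intro!: derivative_eq_intros simp: field_simps)

(* By strict concavity, beyond a positive root the gap is negative. *)
lemma fixed_point_gap_negative:
  assumes R: "0 < R" and g: "0 < g" "fixed_point_gap R g = 0" and x: "g < x"
  shows "fixed_point_gap R x < 0"
proof (rule ccontr)
  assume "\<not> fixed_point_gap R x < 0"
  then have gap_x: "fixed_point_gap R x \<ge> 0" by simp
  obtain c1 where c1: "0 < c1" "c1 < g"
    "fixed_point_gap R g - fixed_point_gap R 0 = (g - 0) * (exp (- c1 / R) / R - 1)"
    using MVT2[OF g(1), of "fixed_point_gap R" "\<lambda>x. exp (- x / R) / R - 1"]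
      fixed_point_gap_deriv R by auto
  obtain c2 where c2: "g < c2" "c2 < x"
    "fixed_point_gap R x - fixed_point_gap R g = (x - g) * (exp (- c2 / R) / R - 1)"
    using MVT2[OF x, of "fixed_point_gap R" "\<lambda>x. exp (- x / R) / R - 1"]
      fixed_point_gap_deriv R by auto
  have "exp (- c1 / R) / R - 1 = 0" using c1 g by (simp add: fixed_point_gap_def)
  moreover have "exp (- c2 / R) / R - 1 \<ge> 0"
    using c2(3) gap_x g(2) x by (simp add: zero_le_mult_iff)
  moreover have "exp (- c2 / R) / R < exp (- c1 / R) / R"
    using c1 c2 R by (simp add: divide_strict_right_mono)
  ultimately show False by simp
qed

(* For R < 1 the gap is positive just right of 0 and negative at 1, so it has a root
   in (0,1). *)
lemma fixed_point_gap_root_exists: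
  assumes R: "0 < R" "R < 1"
  shows "\<exists>g. 0 < g \<and> g < 1 \<and> fixed_point_gap R g = 0"
proof -
  have "0 < exp (- 0 / R) / R - 1" using R by (simp add: field_simps)
  then obtain d where d: "d > 0" "\<forall>h>0. h < d \<longrightarrow> fixed_point_gap R 0 < fixed_point_gap R (0 + h)"
    using DERIV_pos_inc_right[OF fixed_point_gap_deriv[of R 0]] R by auto
  define e where "e = min (d / 2) (1 / 2)"
  have e: "0 < e" "e < d" "e < 1" using d by (auto simp: e_def)
  have "fixed_point_gap R e > 0" using d(2) e by (auto simp: fixed_point_gap_def)
  moreover have "fixed_point_gap R 1 < 0" by (simp add: fixed_point_gap_def)
  moreover have "continuous_on {e..1} (fixed_point_gap R)"
    using R by (intro continuous_at_imp_continuous_on ballI DERIV_isCont[OF fixed_point_gap_deriv]) auto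
  ultimately obtain g where g: "e \<le> g" "g \<le> 1" "fixed_point_gap R g = 0"
    using IVT2'[of "fixed_point_gap R" 1 0 e] e by auto
  then have "g \<noteq> 1" using \<open>fixed_point_gap R 1 < 0\<close> by auto
  then show ?thesis using g e by (intro exI[of _ g]) auto
qed

lemma GG_spec:
  assumes "0 < R" "R < 1"
  shows "0 < GG R \<and> GG R < 1 \<and> GG R = 1 - exp (- GG R / R)"
proof -
  obtain g where g: "0 < g" "g < 1" "fixed_point_gap R g = 0"
    using fixed_point_gap_root_exists[OF assms] by blast
  have unique: "y = g" if y: "0 < y \<and> y < 1 \<and> y = 1 - exp (- y / R)" for y
  proof -
    have gap_y: "fixed_point_gap R y = 0" using y by (simp add: fixed_point_gap_def)
    have "\<not> g < y" using fixed_point_gap_negative[OF assms(1) g(1,3), of y] gap_y by auto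
    moreover have "\<not> y < g" using fixed_point_gap_negative[OF assms(1) _ gap_y, of g] y g(3) by auto
    ultimately show ?thesis by linarith
  qed
  have "\<exists>!G. 0 < G \<and> G < 1 \<and> G = 1 - exp (- G / R)"
  proof (rule ex1I[of _ g])
    show "0 < g \<and> g < 1 \<and> g = 1 - exp (- g / R)" using g by (simp add: fixed_point_gap_def)
  qed (rule unique)
  then show ?thesis unfolding GG_def by (rule theI')
qed

lemma GG_upper_bound:
  assumes R: "0 < R" "R < 1" and x: "0 \<le> x" "x \<le> 1 - exp (- x / R)"
  shows "x \<le> GG R"
proof (rule ccontr)
  assume "\<not> x \<le> GG R"
  moreover have "fixed_point_gap R (GG R) = 0" "0 < GG R"
    using GG_spec[OF R] by (simp_all add: fixed_point_gap_def)
  ultimately have "fixed_point_gap R x < 0" using fixed_point_gap_negative[OF R(1)] by simp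
  then show False using x by (simp add: fixed_point_gap_def)
qed


lemma orbit_limit_fixed_point:
  fixes \<phi> :: "'a::t2_space \<Rightarrow> 'a"
  assumes "isCont \<phi> z" "(\<lambda>l. (\<phi> ^^ l) y) \<longlonglongrightarrow> z"
  shows "\<phi> z = z"
proof -
  have "(\<lambda>l. \<phi> ((\<phi> ^^ l) y)) \<longlonglongrightarrow> \<phi> z" by (rule isCont_tendsto_compose[OF assms])
  moreover have "(\<lambda>l. \<phi> ((\<phi> ^^ l) y)) \<longlonglongrightarrow> z"
    using LIMSEQ_Suc[OF assms(2)] by simp
  ultimately show ?thesis using LIMSEQ_unique by blast
qed

lemma orbit_stays_above:
  fixes \<phi> :: "real \<Rightarrow> real"
  assumes mono: "\<And>y. x \<le> y \<Longrightarrow> y \<le> b \<Longrightarrow> \<phi> x \<le> \<phi> y"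
    and bounded: "\<And>y. x \<le> y \<Longrightarrow> y \<le> b \<Longrightarrow> \<phi> y \<le> b"
    and "x \<le> \<phi> x" "x \<le> y" "y \<le> b"
  shows "x \<le> (\<phi> ^^ l) y \<and> (\<phi> ^^ l) y \<le> b"
proof (induction l)
  case 0
  then show ?case using assms(4,5) by simp
next
  case (Suc l)
  then show ?case using mono[of "(\<phi> ^^ l) y"] bounded[of "(\<phi> ^^ l) y"] assms(3) by simp
qed

(* If f is nondecreasing on [0,1] with f 0 = 0, f 1 <= 1 and
   integral R, and the curve x |-> 1 - exp(-a f x) lies below the diagonal, then comparing
   the integrals of (1 - exp(-a f)) f' and x f' gives a R <= 1 - exp(-a). *)
lemma area_bound:
  fixes f f' :: "real \<Rightarrow> real" and a R :: real
  assumes a: "0 < a"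
    and deriv: "\<And>p. (f has_real_derivative f' p) (at p)"
    and f'_nonneg: "\<And>p. 0 \<le> p \<Longrightarrow> p \<le> 1 \<Longrightarrow> 0 \<le> f' p"
    and int: "(f has_integral R) {0..1}"
    and f0: "f 0 = 0" and f1: "f 1 \<le> 1"
    and below_diagonal: "\<And>x. 0 \<le> x \<Longrightarrow> x \<le> 1 \<Longrightarrow> 1 - exp (- a * f x) \<le> x"
  shows "a * R \<le> 1 - exp (- a)"
proof -
  define F where "F q = q + exp (- a * q) / a" for q
  have "((\<lambda>x. (1 - exp (- a * f x)) * f' x) has_integral (F (f 1) - F (f 0))) {0..1}"
    by (rule has_integral_unit_interval[where F="\<lambda>x. F (f x)"])
      (use a in \<open>auto intro!: derivative_eq_intros deriv simp: F_def field_simps\<close>)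
  then have curve: "((\<lambda>x. (1 - exp (- a * f x)) * f' x) has_integral
                   (f 1 + exp (- a * f 1) / a - 1 / a)) {0..1}"
    by (simp add: F_def f0)
  have "((\<lambda>x. f x + x * f' x) has_integral (1 * f 1 - 0 * f 0)) {0..1}"
    by (rule has_integral_unit_interval[where F="\<lambda>x. x * f x"])
      (auto intro!: derivative_eq_intros deriv)
  from has_integral_diff[OF this int]
  have diagonal: "((\<lambda>x. x * f' x) has_integral (f 1 - R)) {0..1}" by simp
  have "f 1 + exp (- a * f 1) / a - 1 / a \<le> f 1 - R"
    using below_diagonal f'_nonneg by (intro has_integral_le[OF curve diagonal] mult_right_mono) auto
  then have "a * R \<le> a * (1 / a - exp (- a * f 1) / a)"
    using a by (intro mult_left_mono) auto
  then have "a * R \<le> 1 - exp (- a * f 1)"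
    using a by (simp add: right_diff_distrib)
  moreover have "exp (- a) \<le> exp (- a * f 1)" using a f1 by simp
  ultimately show ?thesis by linarith
qed

lemma density_evolution_bound:
  fixes f f' :: "real \<Rightarrow> real" and G R :: real
  assumes R: "0 < R" and G: "0 \<le> G"
    and deriv: "\<And>p. (f has_real_derivative f' p) (at p)"
    and f'_nonneg: "\<And>p. 0 \<le> p \<Longrightarrow> p \<le> 1 \<Longrightarrow> 0 \<le> f' p"
    and int: "(f has_integral R) {0..1}"
    and f1: "f 1 \<le> 1"
    and conv: "p_seq f G R \<longlonglongrightarrow> 0"
  shows "G \<le> 1 - exp (- G / R)"
proof (cases "G = 0")
  case False
  define a where "a = G / R"
  have a: "0 < a" using R G False by (simp add: a_def)
  define \<phi> where "\<phi> x = 1 - exp (- a * f x)" for x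
  have orbit: "p_seq f G R l = (\<phi> ^^ l) (1 - exp (- a))" for l
    unfolding p_seq_def f_s_def \<phi>_def a_def by simp
  have mono: "f x \<le> f y" if "0 \<le> x" "x \<le> y" "y \<le> 1" for x y
  proof (rule DERIV_nonneg_imp_increasing_open[OF that(2)])
    fix z assume "x < z" "z < y"
    then show "\<exists>d. (f has_real_derivative d) (at z) \<and> 0 \<le> d" using that deriv f'_nonneg by force
  next
    show "continuous_on {x..y} f"
      using deriv by (intro continuous_at_imp_continuous_on ballI DERIV_isCont) auto
  qed
  have "isCont \<phi> 0"
    unfolding \<phi>_def by (intro continuous_intros DERIV_isCont[OF deriv])
  then have "\<phi> 0 = 0"
    using orbit_limit_fixed_point conv unfolding orbit by blast
  then have f0: "f 0 = 0" using a by (simp add: \<phi>_def)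
  have "\<phi> x \<le> x" if "0 < x" "x \<le> 1" for x
  proof (rule ccontr)
    assume "\<not> \<phi> x \<le> x"
    then have above: "x \<le> \<phi> x" by simp
    have \<phi>_mono: "\<phi> x \<le> \<phi> y" if "x \<le> y" "y \<le> 1" for y
      using mono[OF _ that] \<open>0 < x\<close> a by (simp add: \<phi>_def)
    have \<phi>_le_1: "\<phi> y \<le> 1" for y by (simp add: \<phi>_def)
    have "\<phi> x \<le> 1 - exp (- a)"
      using mono[of x 1] that f1 a by (simp add: \<phi>_def)
    then have "x \<le> 1 - exp (- a)" "1 - exp (- a) \<le> 1" using above by auto
    then have "x \<le> (\<phi> ^^ l) (1 - exp (- a))" for l
      using orbit_stays_above[of x 1 \<phi>, OF \<phi>_mono \<phi>_le_1 above] by blast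
    then have "x \<le> 0" using LIMSEQ_le_const[OF conv[unfolded orbit]] by blast
    then show False using \<open>0 < x\<close> by simp
  qed
  then have "\<phi> x \<le> x" if "0 \<le> x" "x \<le> 1" for x
    using that \<open>\<phi> 0 = 0\<close> by (cases "x = 0") auto
  then have "a * R \<le> 1 - exp (- a)"
    using area_bound[OF a deriv f'_nonneg int f0 f1] by (simp add: \<phi>_def)
  then show ?thesis using R by (simp add: a_def)
qed simp

lemma p_seq_zero: "p_seq f 0 R = (\<lambda>_. 0)"
proof
  fix l show "p_seq f 0 R l = 0"
    unfolding p_seq_def f_s_def by (induction l) auto
qed


theorem mainTheorem8:
  fixes \<theta> k :: nat and \<Lambda> :: "nat \<Rightarrow> real" and n :: "nat \<Rightarrow> nat"
    and M :: "nat \<Rightarrow> nat \<Rightarrow> nat \<Rightarrow> bit" and R :: real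
  assumes "\<theta> \<ge> 1"
    and "\<forall>h<\<theta>. good_gen_matrix (M h) k (n h)"
    and "\<forall>h<\<theta>. \<Lambda> h \<ge> 0"
    and "(\<Sum>h<\<theta>. \<Lambda> h) = 1"
    and "R = real k / avg_len \<theta> \<Lambda> n"
    and "0 < R" and "R < 1"
  shows "threshold \<theta> \<Lambda> n M k \<le> GG R"
proof -
  have k: "0 < k" and avg: "0 < avg_len \<theta> \<Lambda> n"
    using assms(5,6) by (auto simp: zero_less_divide_iff)
  have rank: "\<forall>h<\<theta>. col_rank (M h) k {..<n h} = k"
    using assms(2) by (simp add: good_gen_matrix_def)
  then have len: "\<forall>h<\<theta>. 0 < n h"
    using k col_rank_le_card[of "{..<_}"] by (metis card_lessThan finite_lessThan gr0I le_zero_eq)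
  obtain f' where deriv: "\<And>p. (f_b \<theta> \<Lambda> n M k has_real_derivative f' p) (at p)"
    and f'_nonneg: "\<And>p. 0 \<le> p \<Longrightarrow> p \<le> 1 \<Longrightarrow> 0 \<le> f' p"
    using f_b_nondecreasing[OF len assms(3) avg] by blast
  have int: "(f_b \<theta> \<Lambda> n M k has_integral R) {0..1}"
    using f_b_integral[OF rank len assms(4)] assms(5) by simp
  have "G \<le> GG R" if "0 \<le> G" "p_seq (f_b \<theta> \<Lambda> n M k) G R \<longlonglongrightarrow> 0" for G
    using density_evolution_bound[OF assms(6) that(1) deriv f'_nonneg int
        f_b_at_1[OF len assms(3) avg] that(2)]
    by (intro GG_upper_bound assms(6,7) that(1))
  moreover have "0 \<in> {G. 0 \<le> G \<and> p_seq (f_b \<theta> \<Lambda> n M k) G R \<longlonglongrightarrow> 0}"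
    by (simp add: p_seq_zero)
  ultimately show ?thesis
    unfolding threshold_def assms(5)[symmetric] by (intro cSup_least) auto
qed

end
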